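(* Assume $H=0$ and that the Riccati equation $\dot K+K(A+G)+(A+G)^TK-\gamma K^2-\widehat Q=0$, $K(T)=-H$, has a unique solution on $[0,T]$. Let $\Phi(t,s)$ be the fundamental solution matrix of $\dot\varphi=(A+G-\gamma K(t))\varphi$ with $\Phi(s,s)=I$, and define $c_1=\max_{t\in[0,T]}|K(t)|$, $c_2=\max_{0\le t,s\le T}|\Phi(t,s)|$, $c_3=\max_{t\in[0,T]}\int_t^T|e^{A(s-t)}|\,s\,ds$, $c_4=\max_{t\in[0,T]}\int_t^T|e^{A(s-t)}|(Ts-\frac{s^2}{2})ds$. If $c_2\,|BR^{-1}B^T|\cdot|Q(I-\Gamma)|\,(c_3+\gamma c_1c_2c_4)<1$, then the system (MF) has a unique solution on $[0,T]$.
   Context: Fix integers $n,n_1\ge1$, $T>0$, constant matrices $A,G,\Gamma\in\mathbb R^{n\times n}$, $B\in\mathbb R^{n\times n_1}$, $\eta,m_0\in\mathbb R^n$, $\gamma>0$, symmetric $Q\ge0$, $H\ge0$ ($n\times n$), $R>0$ ($n_1\times n_1$). $|\cdot|$ is the Euclidean norm for vectors and the Frobenius norm for matrices; $\widehat Q=(I-\Gamma)^TQ(I-\Gamma)$. (MF) is the system $\dot{\mathbf m}=(A+G)\mathbf m+BR^{-1}B^T\mathbf y+\gamma\mathbf p$, $\dot{\mathbf p}=-(A+G)^T\mathbf p-(I-\Gamma)^TQ[\mathbf m-(\Gamma\mathbf m+\eta)]$, $\dot{\mathbf y}=-A^T\mathbf y+Q[\mathbf m-(\Gamma\mathbf m+\eta)]$,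 $\mathbf m(0)=m_0$, $\mathbf p(T)=H\mathbf m(T)$, $\mathbf y(T)=-H\mathbf m(T)$. *)

theory Defs
  imports "HOL-Analysis.Analysis"
begin

text \<open>Matrix powers and the matrix exponential for square matrices real^'n^'n
  (the type's own times/exp are componentwise, so we define them via the matrix product).\<close>

primrec mpow :: "real^'n^'n \<Rightarrow> nat \<Rightarrow> real^'n^'n" where
  "mpow M 0 = mat 1"
| "mpow M (Suc k) = mpow M k ** M"

definition mexp :: "real^'n^'n \<Rightarrow> real^'n^'n" where
  "mexp M = (\<Sum>k. (1 / fact k) *\<^sub>R mpow M k)"

definition psd :: "real^'n^'n \<Rightarrow> bool" where
  "psd M \<longleftrightarrow> transpose M = M \<and> (\<forall>x. 0 \<le> x \<bullet> (M *v x))"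

definition pd :: "real^'n^'n \<Rightarrow> bool" where
  "pd M \<longleftrightarrow> transpose M = M \<and> (\<forall>x. x \<noteq> 0 \<longrightarrow> 0 < x \<bullet> (M *v x))"

definition riccati_sol ::
  "real^'n^'n \<Rightarrow> real^'n^'n \<Rightarrow> real \<Rightarrow> real^'n^'n \<Rightarrow> real^'n^'n \<Rightarrow> real
   \<Rightarrow> (real \<Rightarrow> real^'n^'n) \<Rightarrow> bool" where
  "riccati_sol A G \<gamma> Qh H T K \<longleftrightarrow>
     K T = - H \<and>
     (\<forall>t\<in>{0..T}. (K has_vector_derivative
        (- (K t ** (A + G)) - transpose (A + G) ** K t + \<gamma> *\<^sub>R (K t ** K t) + Qh))
        (at t within {0..T}))"

definition fundamental_matrix ::
  "real^'n^'n \<Rightarrow> real^'n^'n \<Rightarrow> real \<Rightarrow> (real \<Rightarrow> real^'n^'n) \<Rightarrow> real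
   \<Rightarrow> (real \<Rightarrow> real \<Rightarrow> real^'n^'n) \<Rightarrow> bool" where
  "fundamental_matrix A G \<gamma> K T \<Phi> \<longleftrightarrow>
     (\<forall>s\<in>{0..T}. \<Phi> s s = mat 1 \<and>
        (\<forall>t\<in>{0..T}. ((\<lambda>\<tau>. \<Phi> \<tau> s) has_vector_derivative
            ((A + G - \<gamma> *\<^sub>R K t) ** \<Phi> t s)) (at t within {0..T})))"

definition MF_sol ::
  "real^'n^'n \<Rightarrow> real^'n^'n \<Rightarrow> real^'n^'n \<Rightarrow> real^'k^'n \<Rightarrow> real^'k^'k \<Rightarrow> real^'n^'n
   \<Rightarrow> real^'n^'n \<Rightarrow> real^'n \<Rightarrow> real^'n \<Rightarrow> real \<Rightarrow> real
   \<Rightarrow> (real \<Rightarrow> real^'n) \<Rightarrow> (real \<Rightarrow> real^'n) \<Rightarrow> (real \<Rightarrow> real^'n) \<Rightarrow> bool" where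
  "MF_sol A G \<Gamma> B R Q H \<eta> m0 \<gamma> T m p y \<longleftrightarrow>
     m 0 = m0 \<and> p T = H *v m T \<and> y T = - (H *v m T) \<and>
     (\<forall>t\<in>{0..T}.
        (m has_vector_derivative
           ((A + G) *v m t + (B ** matrix_inv R ** transpose B) *v y t + \<gamma> *\<^sub>R p t))
           (at t within {0..T}) \<and>
        (p has_vector_derivative
           (- (transpose (A + G) *v p t)
            - (transpose (mat 1 - \<Gamma>) ** Q) *v (m t - (\<Gamma> *v m t + \<eta>))))
           (at t within {0..T}) \<and>
        (y has_vector_derivative
           (- (transpose A *v y t) + Q *v (m t - (\<Gamma> *v m t + \<eta>))))
           (at t within {0..T}))"

end

(*
  With H = 0 the Riccati solution K is symmetric (K^T solves the same equation, so uniqueness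
  applies), and phi = p + K m decouples (MF): phi solves the adjoint of
  phi' = (A + G - gamma K) phi driven by K N y, where N = B R^-1 B^T, while m solves the
  forward equation driven by N y + gamma phi, and y is given by the variation-of-constants
  formula with exp((s - t) A). Writing these three solutions as integrals and estimating them
  in terms of Y = sup |y| yields sup |y| <= kappa Y, where kappa is exactly the constant of the
  smallness hypothesis; so kappa < 1 leaves only the trivial solution of the homogeneous
  problem. Since the solution space of the linear system is finite-dimensional, this uniqueness
  gives existence (Fredholm alternative for the shooting map), and linearity gives uniqueness.
*)

theory Submission
  imports Defs
begin

text \<open>Keep \<open>transpose A *v x\<close> as it is instead of rewriting it to \<open>x v* A\<close>.\<close>
declare transpose_matrix_vector [simp del]

section \<open>Frobenius norm inequalities\<close>

lemma norm_vec_power2: "(norm (x::real^'n))\<^sup>2 = (\<Sum>i\<in>UNIV. (x $ i)\<^sup>2)"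
  by (simp add: norm_vec_def L2_set_def sum_nonneg)

lemma norm_matrix_power2: "(norm (X::real^'n^'m))\<^sup>2 = (\<Sum>i\<in>UNIV. (norm (X $ i))\<^sup>2)"
  by (simp add: norm_vec_def L2_set_def sum_nonneg)

lemma norm_matrix_vector_mult_le: "norm (X *v v) \<le> norm (X::real^'n^'m) * norm (v::real^'n)"
proof -
  have row: "((X *v v) $ i)\<^sup>2 \<le> (norm (X $ i))\<^sup>2 * (norm v)\<^sup>2" for i
  proof -
    have "\<bar>(X *v v) $ i\<bar> \<le> norm (X $ i) * norm v"
      using Cauchy_Schwarz_ineq2[of "X $ i" v]
      by (simp add: matrix_vector_mult_def inner_vec_def mult.commute)
    then have "\<bar>(X *v v) $ i\<bar>\<^sup>2 \<le> (norm (X $ i) * norm v)\<^sup>2"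
      by (rule power_mono) simp
    then show ?thesis by (simp add: power_mult_distrib)
  qed
  have "(norm (X *v v))\<^sup>2 \<le> (\<Sum>i\<in>UNIV. (norm (X $ i))\<^sup>2 * (norm v)\<^sup>2)"
    unfolding norm_vec_power2[of "X *v v"] by (intro sum_mono row)
  also have "\<dots> = (norm X * norm v)\<^sup>2"
    by (simp add: norm_matrix_power2 power_mult_distrib sum_distrib_right)
  finally show ?thesis by (rule power2_le_imp_le) simp
qed

lemma norm_transpose: "norm (transpose (X::real^'n^'m)) = norm X"
proof -
  have "(norm (transpose X))\<^sup>2 = (norm X)\<^sup>2"
    unfolding norm_matrix_power2 norm_vec_power2 by (simp add: transpose_def) (rule sum.swap)
  then show ?thesis by (simp add: power2_eq_iff_nonneg)
qed

lemma norm_transpose_matrix_vector_mult_le: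
  "norm (transpose X *v v) \<le> norm (X::real^'n^'m) * norm (v::real^'m)"
  using norm_matrix_vector_mult_le[of "transpose X" v] by (simp only: norm_transpose)

lemma norm_matrix_mult_le: "norm (X ** Y) \<le> norm (X::real^'n^'m) * norm (Y::real^'k^'n)"
proof -
  have row: "(norm ((X ** Y) $ i))\<^sup>2 \<le> (norm (X $ i))\<^sup>2 * (norm Y)\<^sup>2" for i
  proof -
    have "(X ** Y) $ i = transpose Y *v X $ i"
      by (simp add: vec_eq_iff matrix_matrix_mult_def vector_matrix_mult_def mult.commute
          transpose_matrix_vector)
    then have "norm ((X ** Y) $ i) \<le> norm (X $ i) * norm Y"
      using norm_transpose_matrix_vector_mult_le[of Y "X $ i"] by (simp add: mult.commute)
    then have "(norm ((X ** Y) $ i))\<^sup>2 \<le> (norm (X $ i) * norm Y)\<^sup>2"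
      by (rule power_mono) simp
    then show ?thesis by (simp add: power_mult_distrib)
  qed
  have "(norm (X ** Y))\<^sup>2 \<le> (\<Sum>i\<in>UNIV. (norm (X $ i))\<^sup>2 * (norm Y)\<^sup>2)"
    unfolding norm_matrix_power2[of "X ** Y"] by (intro sum_mono row)
  also have "\<dots> = (norm X * norm Y)\<^sup>2"
    by (simp add: norm_matrix_power2 power_mult_distrib sum_distrib_right)
  finally show ?thesis by (rule power2_le_imp_le) simp
qed

lemma matrix_add_rdistrib: "((A::real^'n^'m) + B) ** C = A ** C + B ** (C::real^'k^'n)"
  by (vector matrix_matrix_mult_def sum.distrib[symmetric] field_simps)

lemma matrix_diff_ldistrib: "(A::real^'n^'m) ** (B - C) = A ** B - A ** (C::real^'k^'n)"
  by (vector matrix_matrix_mult_def sum_subtractf[symmetric] field_simps)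

lemma matrix_diff_rdistrib: "((A::real^'n^'m) - B) ** C = A ** C - B ** (C::real^'k^'n)"
  by (vector matrix_matrix_mult_def sum_subtractf[symmetric] field_simps)

lemma matrix_vector_mult_uminus: "(A::real^'n^'m) *v (- x) = - (A *v x)"
  by (simp add: vec_eq_iff matrix_vector_mult_def sum_negf)

lemma uminus_matrix_vector_mult: "(- (A::real^'n^'m)) *v x = - (A *v x)"
  by (simp add: vec_eq_iff matrix_vector_mult_def sum_negf)

lemma scaleR_matrix_vector_mult: "(c *\<^sub>R (A::real^'n^'m)) *v x = c *\<^sub>R (A *v x)"
  by (simp add: vec_eq_iff matrix_vector_mult_def sum_distrib_left mult.assoc)

lemma transpose_add: "transpose ((A::real^'n^'m) + B) = transpose A + transpose B"
  and transpose_diff: "transpose (A - B) = transpose A - transpose B"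
  and transpose_uminus: "transpose (- A) = - transpose A"
  by (simp_all add: transpose_def vec_eq_iff)

lemmas matrix_vector_algebra =
  matrix_vector_mult_add_rdistrib matrix_vector_mult_diff_rdistrib matrix_vector_right_distrib
  matrix_vector_mult_diff_distrib matrix_vector_mul_assoc[symmetric] matrix_vector_mult_uminus
  uminus_matrix_vector_mult matrix_vector_mult_scaleR scaleR_matrix_vector_mult
  transpose_add transpose_diff transpose_scalar transpose_uminus matrix_transpose_mul

lemma bounded_bilinear_matrix_matrix_mult:
  "bounded_bilinear ((**) :: real^'n^'m \<Rightarrow> real^'k^'n \<Rightarrow> real^'k^'m)"
proof
  show "\<exists>K. \<forall>a b. norm (a ** b) \<le> norm (a::real^'n^'m) * norm (b::real^'k^'n) * K"
    by (rule exI[of _ 1]) (simp add: norm_matrix_mult_le)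
qed (simp_all add: matrix_add_rdistrib matrix_add_ldistrib scalar_matrix_assoc matrix_scalar_ac)

lemma bounded_bilinear_matrix_vector_mult:
  "bounded_bilinear ((*v) :: real^'n^'m \<Rightarrow> real^'n \<Rightarrow> real^'m)"
proof
  show "\<exists>K. \<forall>a b. norm (a *v b) \<le> norm (a::real^'n^'m) * norm (b::real^'n) * K"
    by (rule exI[of _ 1]) (simp add: norm_matrix_vector_mult_le)
qed (simp_all add: matrix_vector_algebra)

lemma bounded_linear_transpose: "bounded_linear (transpose :: real^'n^'m \<Rightarrow> real^'m^'n)"
proof
  show "\<exists>K. \<forall>x. norm (transpose x) \<le> norm (x::real^'n^'m) * K"
    by (rule exI[of _ 1]) (simp add: norm_transpose)
qed (simp_all add: transpose_def vec_eq_iff)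

section \<open>The matrix exponential\<close>

lemma mpow_scaleR: "mpow (t *\<^sub>R A) k = (t ^ k) *\<^sub>R mpow (A::real^'n^'n) k"
  by (induction k) (simp_all add: matrix_scalar_ac scalar_matrix_assoc[symmetric])

lemma mpow_commute: "A ** mpow A k = mpow (A::real^'n^'n) k ** A"
  by (induction k) (simp_all add: matrix_mul_assoc)

lemma norm_mpow_le: "norm (mpow (A::real^'n^'n) k) \<le> norm (mat 1::real^'n^'n) * norm A ^ k"
proof (induction k)
  case (Suc k)
  have "norm (mpow A (Suc k)) \<le> norm (mpow A k) * norm A" by (simp add: norm_matrix_mult_le)
  also have "\<dots> \<le> norm (mat 1::real^'n^'n) * norm A ^ k * norm A"
    using Suc by (simp add: mult_right_mono)
  finally show ?case by (simp add: mult_ac)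
qed simp

lemma summable_mexp_series: "summable (\<lambda>k. (t ^ k / fact k) *\<^sub>R mpow (A::real^'n^'n) k)"
proof (rule summable_comparison_test')
  show "summable (\<lambda>k. norm (mat 1::real^'n^'n) * (inverse (fact k) * (\<bar>t\<bar> * norm A) ^ k))"
    by (intro summable_mult summable_exp)
next
  fix k :: nat
  have "norm ((t ^ k / fact k) *\<^sub>R mpow A k) = (\<bar>t\<bar> ^ k / fact k) * norm (mpow A k)"
    by (simp add: power_abs)
  also have "\<dots> \<le> (\<bar>t\<bar> ^ k / fact k) * (norm (mat 1::real^'n^'n) * norm A ^ k)"
    by (intro mult_left_mono norm_mpow_le) simp
  also have "\<dots> = norm (mat 1::real^'n^'n) * (inverse (fact k) * (\<bar>t\<bar> * norm A) ^ k)"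
    by (simp add: power_mult_distrib field_simps)
  finally show "norm ((t ^ k / fact k) *\<^sub>R mpow A k)
      \<le> norm (mat 1::real^'n^'n) * (inverse (fact k) * (\<bar>t\<bar> * norm A) ^ k)" .
qed

lemma mexp_scaleR_eq_series: "mexp (t *\<^sub>R A) = (\<Sum>k. (t ^ k / fact k) *\<^sub>R mpow (A::real^'n^'n) k)"
  by (simp add: mexp_def mpow_scaleR)

lemma mexp_zero: "mexp (0::real^'n^'n) = mat 1"
proof -
  have "(\<Sum>k. ((0::real) ^ k / fact k) *\<^sub>R mpow (0::real^'n^'n) k)
      = (\<Sum>k\<in>{0}. ((0::real) ^ k / fact k) *\<^sub>R mpow (0::real^'n^'n) k)"
    by (rule suminf_finite) (auto simp: zero_power)
  then show ?thesis using mexp_scaleR_eq_series[of 0 "0::real^'n^'n"] by simp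
qed

lemma mexp_commute: "A ** mexp (t *\<^sub>R A) = mexp (t *\<^sub>R A) ** (A::real^'n^'n)"
proof -
  have left: "bounded_linear (\<lambda>X::real^'n^'n. A ** X)"
    and right: "bounded_linear (\<lambda>X::real^'n^'n. X ** A)"
    using bounded_bilinear_matrix_matrix_mult
    by (auto intro: bounded_bilinear.bounded_linear_left bounded_bilinear.bounded_linear_right)
  show ?thesis
    unfolding mexp_scaleR_eq_series bounded_linear.suminf[OF left summable_mexp_series]
      bounded_linear.suminf[OF right summable_mexp_series]
    by (simp add: matrix_scalar_ac scalar_matrix_assoc[symmetric] mpow_commute)
qed

lemma has_vector_derivative_matrix_entrywise:
  fixes E :: "real \<Rightarrow> real^'n^'m"
  assumes "\<And>i j. ((\<lambda>t. E t $ i $ j) has_real_derivative (D $ i $ j)) (at t within S)"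
  shows "(E has_vector_derivative D) (at t within S)"
proof -
  define e :: "'m \<Rightarrow> 'n \<Rightarrow> real^'n^'m" where "e i j = (\<chi> a b. if a = i \<and> b = j then 1 else 0)" for i j
  have delta: "(\<Sum>a\<in>UNIV. \<Sum>b\<in>UNIV. if i = a \<and> j = b then g a b else 0) = (g i j :: real)"
    for i :: 'm and j :: 'n and g
  proof -
    have "(\<Sum>b\<in>UNIV. if i = a \<and> j = b then g a b else 0) = (if i = a then g a j else 0)" for a
      by (cases "i = a") simp_all
    then show ?thesis by simp
  qed
  have expand: "X = (\<Sum>i\<in>UNIV. \<Sum>j\<in>UNIV. (X $ i $ j) *\<^sub>R e i j)" for X :: "real^'n^'m"
    by (simp add: e_def vec_eq_iff sum_component if_distrib if_distribR delta cong: if_cong)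
  have "((\<lambda>t. \<Sum>i\<in>UNIV. \<Sum>j\<in>UNIV. (E t $ i $ j) *\<^sub>R e i j) has_vector_derivative
        (\<Sum>i\<in>UNIV. \<Sum>j\<in>UNIV. (D $ i $ j) *\<^sub>R e i j)) (at t within S)"
    by (intro has_vector_derivative_sum has_vector_derivative_scaleR[where g'=0, simplified]
        assms has_vector_derivative_const)
  then show ?thesis by (simp flip: expand)
qed

lemma mexp_has_vector_derivative:
  "((\<lambda>t. mexp (t *\<^sub>R A)) has_vector_derivative (A ** mexp (t *\<^sub>R A))) (at t within S)"
  for A :: "real^'n^'n"
  unfolding mexp_commute
proof (rule has_vector_derivative_matrix_entrywise)
  fix i j
  have entry: "bounded_linear (\<lambda>X::real^'n^'n. X $ i $ j)"
    by (intro bounded_linear_compose[OF bounded_linear_vec_nth] bounded_linear_vec_nth)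
  have right: "bounded_linear (\<lambda>X::real^'n^'n. X ** A)"
    by (rule bounded_bilinear.bounded_linear_left[OF bounded_bilinear_matrix_matrix_mult])
  define c where "c k = mpow A k $ i $ j / fact k" for k
  have mexp_entry: "mexp (t *\<^sub>R A) $ i $ j = (\<Sum>k. c k * t ^ k)" for t
    unfolding mexp_scaleR_eq_series bounded_linear.suminf[OF entry summable_mexp_series]
    by (simp add: c_def ac_simps)
  have "summable (\<lambda>k. ((y ^ k / fact k) *\<^sub>R mpow A k) $ i $ j)" for y
    by (rule bounded_linear.summable[OF entry summable_mexp_series])
  then have "summable (\<lambda>k. c k * y ^ k)" for y
    by (simp add: c_def mult.commute)
  then have "((\<lambda>t. \<Sum>k. c k * t ^ k) has_real_derivative (\<Sum>k. diffs c k * t ^ k)) (at t)"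
    by (rule termdiffs_strong_converges_everywhere)
  moreover have "(mexp (t *\<^sub>R A) ** A) $ i $ j = (\<Sum>k. diffs c k * t ^ k)"
  proof -
    have "(mexp (t *\<^sub>R A) ** A) $ i $ j = (\<Sum>k. (((t ^ k / fact k) *\<^sub>R mpow A k) ** A) $ i $ j)"
      unfolding mexp_scaleR_eq_series bounded_linear.suminf[OF right summable_mexp_series]
      using bounded_linear.suminf[OF entry bounded_linear.summable[OF right summable_mexp_series]]
      by simp
    also have "\<dots> = (\<Sum>k. diffs c k * t ^ k)"
    proof -
      have "diffs c k = mpow A (Suc k) $ i $ j / fact k" for k
        unfolding diffs_def c_def fact_Suc[of k] by (simp del: mpow.simps fact_Suc)
      then show ?thesis
        by (simp add: scalar_matrix_assoc[symmetric] del: mpow.simps) (simp add: field_simps)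
    qed
    finally show ?thesis .
  qed
  ultimately show "((\<lambda>t. mexp (t *\<^sub>R A) $ i $ j) has_real_derivative (mexp (t *\<^sub>R A) ** A) $ i $ j)
      (at t within S)"
    unfolding mexp_entry by (auto intro: has_field_derivative_at_within)
qed

lemma continuous_on_mexp: "continuous_on S (\<lambda>t. mexp ((t - c) *\<^sub>R (A::real^'n^'n)))"
proof -
  have "continuous_on UNIV (\<lambda>t. mexp (t *\<^sub>R A))"
    by (rule continuous_at_imp_continuous_on)
      (auto intro: has_vector_derivative_continuous[OF mexp_has_vector_derivative])
  then show ?thesis
    by (rule continuous_on_compose2) (auto intro!: continuous_intros)
qed

lemma mexp_shift_has_vector_derivative:
  "((\<lambda>s. mexp ((s - c) *\<^sub>R A)) has_vector_derivative (A ** mexp ((s - c) *\<^sub>R A))) (at s within S)"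
  for A :: "real^'n^'n"
proof -
  have "((\<lambda>s. s - c) has_vector_derivative 1) (at s within S)"
    by (auto intro!: derivative_eq_intros simp: has_real_derivative_iff_has_vector_derivative[symmetric])
  from vector_diff_chain_within[OF this mexp_has_vector_derivative]
  show ?thesis by (simp add: o_def)
qed

section \<open>Growth bounds and fundamental solutions of linear equations\<close>

lemma norm_growth_forward:
  fixes x :: "real \<Rightarrow> 'a::real_inner"
  assumes deriv: "\<And>s. s \<in> {a..b} \<Longrightarrow> (x has_vector_derivative x' s) (at s within {a..b})"
    and growth: "\<And>s. s \<in> {a..b} \<Longrightarrow> norm (x' s) \<le> L * norm (x s)"
    and t0: "t0 \<in> {a..b}" and t: "t \<in> {a..b}" and "t0 \<le> t"
  shows "norm (x t) \<le> norm (x t0) * exp (L * (t - t0))"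
proof -
  define g where "g s = exp (- (2 * L * (s - t0))) * (x s \<bullet> x s)" for s
  have "continuous_on {t0..t} x"
    using t0 t by (intro continuous_on_subset[OF continuous_on_vector_derivative[OF deriv]]) auto
  then have cont: "continuous_on {t0..t} g" unfolding g_def by (intro continuous_intros)
  have "g t \<le> g t0"
  proof (rule DERIV_nonpos_imp_decreasing_open[OF \<open>t0 \<le> t\<close> _ cont])
    fix s assume "t0 < s" "s < t"
    then have s: "a < s" "s < b" "s \<in> {a..b}" using t0 t by auto
    have "(x has_vector_derivative x' s) (at s within {a<..<b})"
      by (rule has_vector_derivative_within_subset[OF deriv[OF s(3)]]) auto
    moreover have "at s within {a<..<b} = at s"
      using s by (intro at_within_open) auto
    ultimately have dx: "(x has_vector_derivative x' s) (at s)"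
      by simp
    have "((\<lambda>s. x s \<bullet> x s) has_vector_derivative (x s \<bullet> x' s + x' s \<bullet> x s)) (at s)"
      by (rule bounded_bilinear.has_vector_derivative[OF bounded_bilinear_inner dx dx])
    then have di: "((\<lambda>s. x s \<bullet> x s) has_real_derivative (2 * (x s \<bullet> x' s))) (at s)"
      by (simp add: has_real_derivative_iff_has_vector_derivative inner_commute)
    have de: "((\<lambda>s. exp (- (2 * L * (s - t0)))) has_real_derivative
        exp (- (2 * L * (s - t0))) * (- (2 * L))) (at s)"
      by (auto intro!: derivative_eq_intros)
    define g' where "g' = exp (- (2 * L * (s - t0))) * (-2 * L * (x s \<bullet> x s) + 2 * (x s \<bullet> x' s))"
    have dg: "(g has_real_derivative g') (at s)"
      unfolding g_def g'_def using DERIV_mult[OF de di] by (simp add: algebra_simps)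
    have "x s \<bullet> x' s \<le> norm (x s) * norm (x' s)"
      by (rule Cauchy_Schwarz_ineq2[THEN abs_le_D1])
    also have "\<dots> \<le> norm (x s) * (L * norm (x s))"
      by (rule mult_left_mono[OF growth[OF s(3)]]) simp
    also have "\<dots> = L * (x s \<bullet> x s)"
      by (simp add: power2_norm_eq_inner[symmetric] power2_eq_square)
    finally have "g' \<le> 0"
      unfolding g'_def by (intro mult_nonneg_nonpos) auto
    with dg show "\<exists>y. (g has_real_derivative y) (at s) \<and> y \<le> 0" by blast
  qed
  have "(norm (x t))\<^sup>2 = exp (2 * L * (t - t0)) * g t"
    by (simp add: g_def power2_norm_eq_inner exp_minus)
  also have "\<dots> \<le> exp (2 * L * (t - t0)) * g t0"
    using \<open>g t \<le> g t0\<close> by simp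
  also have "\<dots> = (norm (x t0) * exp (L * (t - t0)))\<^sup>2"
    by (simp add: g_def power2_norm_eq_inner power_mult_distrib mult.commute flip: exp_double)
  finally show ?thesis by (rule power2_le_imp_le) simp
qed

text \<open>The backward estimate is the forward one for the time-reversed curve.\<close>

lemma norm_growth:
  fixes x :: "real \<Rightarrow> 'a::real_inner"
  assumes deriv: "\<And>s. s \<in> {a..b} \<Longrightarrow> (x has_vector_derivative x' s) (at s within {a..b})"
    and growth: "\<And>s. s \<in> {a..b} \<Longrightarrow> norm (x' s) \<le> L * norm (x s)"
    and t0: "t0 \<in> {a..b}" and t: "t \<in> {a..b}"
  shows "norm (x t) \<le> norm (x t0) * exp (L * \<bar>t - t0\<bar>)"
proof (cases "t0 \<le> t")
  case True
  then show ?thesis using norm_growth_forward[OF deriv growth t0 t] by simp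
next
  case False
  have "((\<lambda>s. x (- s)) has_vector_derivative - x' (- s)) (at s within {-b..-a})"
    if "s \<in> {-b..-a}" for s
  proof -
    have "(uminus has_vector_derivative -1) (at s within {-b..-a})"
      by (auto intro!: derivative_eq_intros simp: has_real_derivative_iff_has_vector_derivative[symmetric])
    moreover have "(x has_vector_derivative x' (- s)) (at (- s) within uminus ` {-b..-a})"
      using deriv[of "- s"] that by simp
    ultimately show ?thesis
      using vector_diff_chain_within by (fastforce simp: o_def)
  qed
  moreover have "norm (- x' (- s)) \<le> L * norm (x (- s))" if "s \<in> {-b..-a}" for s
    using growth[of "- s"] that by simp
  ultimately have "norm (x (- (- t))) \<le> norm (x (- (- t0))) * exp (L * (- t - - t0))"
    using t0 t False by (intro norm_growth_forward[where x = "\<lambda>s. x (- s)"]) auto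
  then show ?thesis using False by simp
qed

lemma linear_growth_vanishing:
  fixes x :: "real \<Rightarrow> 'a::real_inner"
  assumes "\<And>s. s \<in> {a..b} \<Longrightarrow> (x has_vector_derivative x' s) (at s within {a..b})"
    and "\<And>s. s \<in> {a..b} \<Longrightarrow> norm (x' s) \<le> L * norm (x s)"
    and "t0 \<in> {a..b}" and "x t0 = 0" and "t \<in> {a..b}"
  shows "x t = 0"
  using norm_growth[OF assms(1,2,3,5)] assms(4) by simp

lemma norm_le_SUP_norm:
  fixes f :: "real \<Rightarrow> 'a::real_normed_vector"
  assumes "continuous_on {a..b} f" and "t \<in> {a..b}"
  shows "norm (f t) \<le> (SUP s\<in>{a..b}. norm (f s))"
proof (rule cSUP_upper[OF assms(2)])
  have "compact ((\<lambda>s. norm (f s)) ` {a..b})"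
    by (intro compact_continuous_image continuous_intros assms(1) compact_Icc)
  then show "bdd_above ((\<lambda>s. norm (f s)) ` {a..b})"
    by (rule bounded_imp_bdd_above[OF compact_imp_bounded])
qed

lemma backward_variation_of_constants:
  fixes U C :: "real \<Rightarrow> real^'n^'n" and x g :: "real \<Rightarrow> real^'n"
  assumes "r \<le> T"
    and U: "\<And>s. s \<in> {r..T} \<Longrightarrow> (U has_vector_derivative (U s ** C s)) (at s within {r..T})"
    and x: "\<And>s. s \<in> {r..T} \<Longrightarrow> (x has_vector_derivative (- (C s *v x s) + g s)) (at s within {r..T})"
    and "x T = 0" and "U r = mat 1"
  shows "((\<lambda>s. U s *v g s) has_integral (- x r)) {r..T}"
proof -
  have "((\<lambda>s. U s *v x s) has_vector_derivative U s *v g s) (at s within {r..T})"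
    if "s \<in> {r..T}" for s
    using bounded_bilinear.has_vector_derivative[OF bounded_bilinear_matrix_vector_mult U[OF that] x[OF that]]
    by (simp add: matrix_vector_algebra)
  from fundamental_theorem_of_calculus[OF \<open>r \<le> T\<close> this] show ?thesis
    using assms(4,5) by simp
qed

locale fundamental_solution =
  fixes M :: "real \<Rightarrow> real^'n^'n" and \<Phi> :: "real \<Rightarrow> real \<Rightarrow> real^'n^'n" and T :: real
  assumes T_pos: "0 < T"
    and M_cont: "continuous_on {0..T} M"
    and Phi_diag: "\<And>s. s \<in> {0..T} \<Longrightarrow> \<Phi> s s = mat 1"
    and Phi_deriv: "\<And>s t. s \<in> {0..T} \<Longrightarrow> t \<in> {0..T} \<Longrightarrow>
        ((\<lambda>\<tau>. \<Phi> \<tau> s) has_vector_derivative (M t ** \<Phi> t s)) (at t within {0..T})"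
begin

lemma zero_in_domain: "0 \<in> {0..T}"
  using T_pos by simp

definition M_bound :: real where "M_bound = (SUP t\<in>{0..T}. norm (M t))"

lemma M_bound_nonneg: "0 \<le> M_bound"
  unfolding M_bound_def by (rule order_trans[OF norm_ge_zero norm_le_SUP_norm[OF M_cont zero_in_domain]])

lemma norm_M_le: "t \<in> {0..T} \<Longrightarrow> norm (M t) \<le> M_bound"
  unfolding M_bound_def by (rule norm_le_SUP_norm[OF M_cont])

lemma norm_M_mult_le: "t \<in> {0..T} \<Longrightarrow> norm (M t ** X) \<le> M_bound * norm X"
  by (rule order_trans[OF norm_matrix_mult_le mult_right_mono[OF norm_M_le norm_ge_zero]])

lemma norm_M_vector_mult_le: "t \<in> {0..T} \<Longrightarrow> norm (M t *v v) \<le> M_bound * norm v"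
  by (rule order_trans[OF norm_matrix_vector_mult_le mult_right_mono[OF norm_M_le norm_ge_zero]])

lemma Phi_cocycle:
  assumes s: "s \<in> {0..T}" and t: "t \<in> {0..T}"
  shows "\<Phi> t s ** \<Phi> s 0 = \<Phi> t 0"
proof -
  let ?X = "\<lambda>\<tau>. \<Phi> \<tau> s ** \<Phi> s 0 - \<Phi> \<tau> 0"
  have deriv: "(?X has_vector_derivative M \<tau> ** ?X \<tau>) (at \<tau> within {0..T})"
    if "\<tau> \<in> {0..T}" for \<tau>
    using has_vector_derivative_diff[OF
        bounded_bilinear.has_vector_derivative[OF bounded_bilinear_matrix_matrix_mult
          Phi_deriv[OF s that] has_vector_derivative_const]
        Phi_deriv[OF zero_in_domain that]]
    by (simp add: matrix_diff_ldistrib matrix_mul_assoc)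
  have "?X s = 0" using Phi_diag[OF s] by simp
  with deriv norm_M_mult_le have "?X t = 0"
    by (rule linear_growth_vanishing[OF _ _ s _ t])
  then show ?thesis by simp
qed

definition \<Psi> :: "real \<Rightarrow> real^'n^'n" where "\<Psi> t = \<Phi> t 0"
definition \<Lambda> :: "real \<Rightarrow> real^'n^'n" where "\<Lambda> s = \<Phi> 0 s"

lemma Lambda_Psi: "s \<in> {0..T} \<Longrightarrow> \<Lambda> s ** \<Psi> s = mat 1"
  unfolding \<Lambda>_def \<Psi>_def using Phi_cocycle[OF _ zero_in_domain] Phi_diag[OF zero_in_domain] by simp

lemma Psi_Lambda: "s \<in> {0..T} \<Longrightarrow> \<Psi> s ** \<Lambda> s = mat 1"
  using Lambda_Psi matrix_left_right_inverse by blast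

lemma Phi_eq_Psi_Lambda:
  assumes "s \<in> {0..T}" "t \<in> {0..T}"
  shows "\<Phi> t s = \<Psi> t ** \<Lambda> s"
proof -
  have "\<Phi> t s = \<Phi> t s ** (\<Psi> s ** \<Lambda> s)" using Psi_Lambda[OF assms(1)] by simp
  also have "\<dots> = \<Psi> t ** \<Lambda> s"
    using Phi_cocycle[OF assms] by (simp add: matrix_mul_assoc \<Psi>_def)
  finally show ?thesis .
qed

lemma norm_Phi_le:
  assumes s: "s \<in> {0..T}" and t: "t \<in> {0..T}"
  shows "norm (\<Phi> t s) \<le> norm (mat 1::real^'n^'n) * exp (M_bound * T)"
proof -
  have "M_bound * \<bar>t - s\<bar> \<le> M_bound * T"
    using s t M_bound_nonneg by (intro mult_left_mono) auto
  moreover have "norm (\<Phi> t s) \<le> norm (\<Phi> s s) * exp (M_bound * \<bar>t - s\<bar>)"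
    using norm_M_mult_le by (intro norm_growth[OF Phi_deriv[OF s] _ s t])
  ultimately show ?thesis
    unfolding Phi_diag[OF s] by (meson exp_le_cancel_iff mult_left_mono norm_ge_zero order_trans)
qed

lemma Psi_deriv: "t \<in> {0..T} \<Longrightarrow> (\<Psi> has_vector_derivative M t ** \<Psi> t) (at t within {0..T})"
  unfolding \<Psi>_def[abs_def] by (rule Phi_deriv[OF zero_in_domain])

lemma Psi_cont: "continuous_on {0..T} \<Psi>"
  by (rule continuous_on_vector_derivative[OF Psi_deriv])

lemma Lambda_cont: "continuous_on {0..T} \<Lambda>"
  unfolding continuous_on_def
proof (intro ballI)
  fix s assume s: "s \<in> {0..T}"
  define C where "C = norm (mat 1::real^'n^'n) * exp (M_bound * T)"
  have "norm (\<Lambda> u - \<Lambda> s) \<le> C * C * norm (\<Psi> u - \<Psi> s)" if u: "u \<in> {0..T}" for u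
  proof -
    have "\<Lambda> u - \<Lambda> s = \<Lambda> u ** (\<Psi> s - \<Psi> u) ** \<Lambda> s"
      by (simp add: matrix_diff_ldistrib matrix_diff_rdistrib Psi_Lambda[OF s] flip: matrix_mul_assoc)
        (simp add: matrix_mul_assoc Lambda_Psi[OF u])
    then have "norm (\<Lambda> u - \<Lambda> s) \<le> norm (\<Lambda> u ** (\<Psi> s - \<Psi> u)) * norm (\<Lambda> s)"
      by (simp add: norm_matrix_mult_le)
    also have "\<dots> \<le> norm (\<Lambda> u) * norm (\<Psi> u - \<Psi> s) * norm (\<Lambda> s)"
      using norm_matrix_mult_le[of "\<Lambda> u" "\<Psi> s - \<Psi> u"]
      by (simp add: mult_right_mono norm_minus_commute)
    also have "\<dots> \<le> C * norm (\<Psi> u - \<Psi> s) * C"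
      using norm_Phi_le[OF u zero_in_domain] norm_Phi_le[OF s zero_in_domain]
      unfolding \<Lambda>_def C_def by (intro mult_mono) auto
    finally show ?thesis by (simp add: mult_ac)
  qed
  then have "eventually (\<lambda>u. norm (\<Lambda> u - \<Lambda> s) \<le> C * C * norm (\<Psi> u - \<Psi> s))
      (at s within {0..T})"
    by (auto simp: eventually_at_filter intro!: always_eventually)
  moreover have "((\<lambda>u. \<Psi> u - \<Psi> s) \<longlongrightarrow> 0) (at s within {0..T})"
    using Psi_cont s unfolding continuous_on_def by (simp flip: Lim_null)
  then have "((\<lambda>u. C * C * norm (\<Psi> u - \<Psi> s)) \<longlongrightarrow> 0) (at s within {0..T})"
    by (intro tendsto_mult_right_zero tendsto_norm_zero)
  ultimately have "((\<lambda>u. \<Lambda> u - \<Lambda> s) \<longlongrightarrow> 0) (at s within {0..T})"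
    by (rule Lim_null_comparison)
  then show "(\<Lambda> \<longlongrightarrow> \<Lambda> s) (at s within {0..T})"
    by (simp add: Lim_null[symmetric])
qed

lemma variation_of_constants:
  assumes x: "\<And>t. t \<in> {0..T} \<Longrightarrow> (x has_vector_derivative (M t *v x t + f t)) (at t within {0..T})"
    and "x 0 = 0" and f: "continuous_on {0..T} f" and t: "t \<in> {0..T}"
  shows "((\<lambda>s. \<Phi> t s *v f s) has_integral x t) {0..t}"
proof -
  define g where "g s = \<Lambda> s *v f s" for s
  have g: "continuous_on {0..T} g"
    unfolding g_def by (rule bounded_bilinear.continuous_on[OF bounded_bilinear_matrix_vector_mult Lambda_cont f])
  define w where "w u = \<Psi> u *v integral {0..u} g" for u
  have deriv: "((\<lambda>u. x u - w u) has_vector_derivative (M u *v (x u - w u))) (at u within {0..T})"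
    if u: "u \<in> {0..T}" for u
  proof -
    have "(w has_vector_derivative \<Psi> u *v g u + (M u ** \<Psi> u) *v integral {0..u} g) (at u within {0..T})"
      unfolding w_def[abs_def]
      by (rule bounded_bilinear.has_vector_derivative[OF bounded_bilinear_matrix_vector_mult
            Psi_deriv[OF u] integral_has_vector_derivative[OF g u]])
    moreover have "\<Psi> u *v g u = f u"
      by (simp add: g_def matrix_vector_mul_assoc Psi_Lambda[OF u])
    ultimately have "(w has_vector_derivative f u + M u *v w u) (at u within {0..T})"
      by (simp add: w_def matrix_vector_mul_assoc)
    from has_vector_derivative_diff[OF x[OF u] this] show ?thesis
      by (simp add: matrix_vector_mult_diff_distrib)
  qed
  have "x 0 - w 0 = 0" by (simp add: \<open>x 0 = 0\<close> w_def)
  with deriv norm_M_vector_mult_le have "x t - w t = 0"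
    by (rule linear_growth_vanishing[OF _ _ zero_in_domain _ t])
  then have xt: "x t = \<Psi> t *v integral {0..t} g" by (simp add: w_def)
  have "g integrable_on {0..t}"
    using t by (intro integrable_continuous_interval continuous_on_subset[OF g]) auto
  then have "((\<lambda>s. \<Psi> t *v g s) has_integral (\<Psi> t *v integral {0..t} g)) {0..t}"
    by (intro has_integral_linear[OF _ bounded_bilinear.bounded_linear_right[OF
          bounded_bilinear_matrix_vector_mult], unfolded o_def] integrable_integral)
  then show ?thesis
    unfolding xt
  proof (rule has_integral_eq[rotated])
    fix s assume "s \<in> {0..t}"
    then have "s \<in> {0..T}" using t by auto
    then show "\<Psi> t *v g s = \<Phi> t s *v f s"
      by (simp add: g_def Phi_eq_Psi_Lambda[OF _ t] matrix_vector_mul_assoc)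
  qed
qed

lemma adjoint_variation_of_constants:
  assumes r: "r \<in> {0..T}"
    and x: "\<And>s. s \<in> {0..T} \<Longrightarrow>
      (x has_vector_derivative (- (transpose (M s) *v x s) + g s)) (at s within {0..T})"
    and "x T = 0"
  shows "((\<lambda>s. transpose (\<Phi> s r) *v g s) has_integral (- x r)) {r..T}"
proof (rule backward_variation_of_constants[where C = "\<lambda>s. transpose (M s)"])
  fix s assume "s \<in> {r..T}"
  then have s: "s \<in> {0..T}" and sub: "{r..T} \<subseteq> {0..T}" using r by auto
  have "((\<lambda>s. transpose (\<Phi> s r)) has_vector_derivative transpose (M s ** \<Phi> s r)) (at s within {0..T})"
    by (rule bounded_linear.has_vector_derivative[OF bounded_linear_transpose Phi_deriv[OF r s]])
  then show "((\<lambda>s. transpose (\<Phi> s r)) has_vector_derivative transpose (\<Phi> s r) ** transpose (M s))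
      (at s within {r..T})"
    by (auto simp: matrix_transpose_mul intro: has_vector_derivative_within_subset[OF _ sub])
  show "(x has_vector_derivative - (transpose (M s) *v x s) + g s) (at s within {r..T})"
    by (rule has_vector_derivative_within_subset[OF x[OF s] sub])
qed (use r \<open>x T = 0\<close> Phi_diag[OF r] in auto)

end

section \<open>Decoupling by the Riccati solution and the contraction estimate\<close>

lemma riccati_sol_transpose:
  assumes "transpose Qh = Qh" and "transpose H = H" and "riccati_sol A G \<gamma> Qh H T K"
  shows "riccati_sol A G \<gamma> Qh H T (\<lambda>t. transpose (K t))"
  unfolding riccati_sol_def
proof (intro conjI ballI)
  show "transpose (K T) = - H"
    using assms(2,3) by (simp add: riccati_sol_def transpose_uminus)
  fix t assume "t \<in> {0..T}"
  with assms(3) have "(K has_vector_derivative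
      - (K t ** (A + G)) - transpose (A + G) ** K t + \<gamma> *\<^sub>R (K t ** K t) + Qh) (at t within {0..T})"
    by (simp add: riccati_sol_def)
  from bounded_linear.has_vector_derivative[OF bounded_linear_transpose this]
  show "((\<lambda>t. transpose (K t)) has_vector_derivative
      - (transpose (K t) ** (A + G)) - transpose (A + G) ** transpose (K t)
      + \<gamma> *\<^sub>R (transpose (K t) ** transpose (K t)) + Qh) (at t within {0..T})"
    by (rule has_vector_derivative_eq_rhs) (simp add: assms(1) matrix_vector_algebra algebra_simps)
qed

lemma riccati_decoupling:
  fixes A G N Qh :: "real^'n^'n" and K :: "real \<Rightarrow> real^'n^'n" and m p y :: "real \<Rightarrow> real^'n"
  assumes p: "(p has_vector_derivative (- (transpose (A + G) *v p t) - Qh *v m t)) (at t within S)"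
    and m: "(m has_vector_derivative ((A + G) *v m t + N *v y t + \<gamma> *\<^sub>R p t)) (at t within S)"
    and K: "(K has_vector_derivative
      (- (K t ** (A + G)) - transpose (A + G) ** K t + \<gamma> *\<^sub>R (K t ** K t) + Qh)) (at t within S)"
    and K_symmetric: "transpose (K t) = K t"
  shows "((\<lambda>t. p t + K t *v m t) has_vector_derivative
      (- (transpose (A + G - \<gamma> *\<^sub>R K t) *v (p t + K t *v m t)) + K t *v (N *v y t))) (at t within S)"
proof -
  have "((\<lambda>t. p t + K t *v m t) has_vector_derivative
      (- (transpose (A + G) *v p t) - Qh *v m t)
      + (K t *v ((A + G) *v m t + N *v y t + \<gamma> *\<^sub>R p t)
         + (- (K t ** (A + G)) - transpose (A + G) ** K t + \<gamma> *\<^sub>R (K t ** K t) + Qh) *v m t))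
      (at t within S)"
    by (intro has_vector_derivative_add p
        bounded_bilinear.has_vector_derivative[OF bounded_bilinear_matrix_vector_mult K m])
  then show ?thesis
    by (rule has_vector_derivative_eq_rhs) (simp add: K_symmetric matrix_vector_algebra algebra_simps)
qed

lemma integral_real_mult_left: "integral S (\<lambda>x. c * f x) = c * integral S (f :: _ \<Rightarrow> real)"
  using integral_cmul[of S c f] by simp

lemma norm_mexp_le_SUP:
  "t \<in> {a..b} \<Longrightarrow> norm (mexp (t *\<^sub>R A)) \<le> (SUP s\<in>{a..b}. norm (mexp (s *\<^sub>R (A::real^'n^'n))))"
  using norm_le_SUP_norm[OF continuous_on_mexp[of _ 0]] by simp

lemma integral_mexp_weight_le_SUP:
  fixes A :: "real^'n^'n" and w :: "real \<Rightarrow> real"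
  assumes w: "continuous_on {0..T} w" and t: "t \<in> {0..T}"
  shows "integral {t..T} (\<lambda>s. norm (mexp ((s - t) *\<^sub>R A)) * w s)
    \<le> (SUP t\<in>{0..T}. integral {t..T} (\<lambda>s. norm (mexp ((s - t) *\<^sub>R A)) * w s))"
proof (rule cSUP_upper[OF t], rule bdd_aboveI2)
  define E where "E = (SUP s\<in>{0..T}. norm (mexp (s *\<^sub>R A)))"
  define W where "W = (SUP s\<in>{0..T}. norm (w s))"
  have E: "norm (mexp (s *\<^sub>R A)) \<le> E" and W: "norm (w s) \<le> W" if "s \<in> {0..T}" for s
    unfolding E_def W_def using that by (rule norm_mexp_le_SUP, rule norm_le_SUP_norm[OF w])
  have "0 \<le> E" "0 \<le> W"
    using order_trans[OF norm_ge_zero E] order_trans[OF norm_ge_zero W] t by auto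
  fix t assume t: "t \<in> {0..T}"
  have "norm (integral {t..T} (\<lambda>s. norm (mexp ((s - t) *\<^sub>R A)) * w s))
      \<le> E * W * Henstock_Kurzweil_Integration.content {t..T}"
  proof (rule has_integral_bound_real[OF _ finite.emptyI integrable_integral])
    show "0 \<le> E * W" using \<open>0 \<le> E\<close> \<open>0 \<le> W\<close> by simp
    show "(\<lambda>s. norm (mexp ((s - t) *\<^sub>R A)) * w s) integrable_on {t..T}"
      using t by (intro integrable_continuous_interval continuous_intros continuous_on_mexp
          continuous_on_subset[OF w]) auto
    fix s assume "s \<in> {t..T} - {}"
    then have "s - t \<in> {0..T}" "s \<in> {0..T}" using t by auto
    with E W have "norm (mexp ((s - t) *\<^sub>R A)) \<le> E" "norm (w s) \<le> W" by blast+
    then show "norm (norm (mexp ((s - t) *\<^sub>R A)) * w s) \<le> E * W"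
      unfolding norm_mult using \<open>0 \<le> E\<close> by (intro mult_mono) auto
  qed
  also have "\<dots> \<le> E * W * T"
    using t \<open>0 \<le> E\<close> \<open>0 \<le> W\<close> by (intro mult_left_mono) auto
  finally show "integral {t..T} (\<lambda>s. norm (mexp ((s - t) *\<^sub>R A)) * w s) \<le> E * W * T"
    by simp
qed

locale MF_homogeneous =
  fixes A G \<Gamma> Q N :: "real^'n^'n" and \<gamma> T :: real
    and K :: "real \<Rightarrow> real^'n^'n" and \<Phi> :: "real \<Rightarrow> real \<Rightarrow> real^'n^'n"
    and m p y :: "real \<Rightarrow> real^'n"
  assumes T_pos: "0 < T" and gamma_pos: "0 < \<gamma>"
    and K_sol: "riccati_sol A G \<gamma> (transpose (mat 1 - \<Gamma>) ** Q ** (mat 1 - \<Gamma>)) 0 T K"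
    and K_symmetric: "\<And>t. t \<in> {0..T} \<Longrightarrow> transpose (K t) = K t"
    and Phi: "fundamental_matrix A G \<gamma> K T \<Phi>"
    and m_deriv: "\<And>t. t \<in> {0..T} \<Longrightarrow>
      (m has_vector_derivative ((A + G) *v m t + N *v y t + \<gamma> *\<^sub>R p t)) (at t within {0..T})"
    and p_deriv: "\<And>t. t \<in> {0..T} \<Longrightarrow>
      (p has_vector_derivative (- (transpose (A + G) *v p t)
         - (transpose (mat 1 - \<Gamma>) ** Q ** (mat 1 - \<Gamma>)) *v m t)) (at t within {0..T})"
    and y_deriv: "\<And>t. t \<in> {0..T} \<Longrightarrow>
      (y has_vector_derivative (- (transpose A *v y t) + (Q ** (mat 1 - \<Gamma>)) *v m t)) (at t within {0..T})"
    and m_0: "m 0 = 0" and p_T: "p T = 0" and y_T: "y T = 0"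
begin

lemma K_deriv: "t \<in> {0..T} \<Longrightarrow> (K has_vector_derivative
    (- (K t ** (A + G)) - transpose (A + G) ** K t + \<gamma> *\<^sub>R (K t ** K t)
     + transpose (mat 1 - \<Gamma>) ** Q ** (mat 1 - \<Gamma>))) (at t within {0..T})"
  using K_sol unfolding riccati_sol_def by blast

lemma K_T: "K T = 0"
  using K_sol by (simp add: riccati_sol_def)

lemma K_cont: "continuous_on {0..T} K"
  by (rule continuous_on_vector_derivative[OF K_deriv])

sublocale fundamental_solution "\<lambda>t. A + G - \<gamma> *\<^sub>R K t" \<Phi> T
proof
  show "continuous_on {0..T} (\<lambda>t. A + G - \<gamma> *\<^sub>R K t)"
    by (intro continuous_intros K_cont)
qed (use T_pos Phi[unfolded fundamental_matrix_def] in blast)+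

definition c1 :: real where "c1 = (SUP t\<in>{0..T}. norm (K t))"
definition c2 :: real where "c2 = (SUP ts\<in>{0..T}\<times>{0..T}. norm (\<Phi> (fst ts) (snd ts)))"
definition c3 :: real where
  "c3 = (SUP t\<in>{0..T}. integral {t..T} (\<lambda>s. norm (mexp ((s - t) *\<^sub>R A)) * s))"
definition c4 :: real where
  "c4 = (SUP t\<in>{0..T}. integral {t..T} (\<lambda>s. norm (mexp ((s - t) *\<^sub>R A)) * (T * s - s\<^sup>2 / 2)))"
definition Y :: real where "Y = (SUP t\<in>{0..T}. norm (y t))"

lemma norm_K_le_c1: "t \<in> {0..T} \<Longrightarrow> norm (K t) \<le> c1"
  unfolding c1_def by (rule norm_le_SUP_norm[OF K_cont])

lemma norm_Phi_le_c2:
  assumes "t \<in> {0..T}" "s \<in> {0..T}"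
  shows "norm (\<Phi> t s) \<le> c2"
proof -
  have "bdd_above ((\<lambda>ts. norm (\<Phi> (fst ts) (snd ts))) ` ({0..T} \<times> {0..T}))"
    by (rule bdd_aboveI2[where M = "norm (mat 1::real^'n^'n) * exp (M_bound * T)"])
       (auto intro: norm_Phi_le)
  from cSUP_upper[OF _ this, of "(t, s)"] show ?thesis
    unfolding c2_def using assms by simp
qed

lemma norm_y_le_Y: "t \<in> {0..T} \<Longrightarrow> norm (y t) \<le> Y"
  unfolding Y_def by (rule norm_le_SUP_norm[OF continuous_on_vector_derivative[OF y_deriv]])

lemma c1_nonneg: "0 \<le> c1" and c2_nonneg: "0 \<le> c2" and Y_nonneg: "0 \<le> Y"
  using order_trans[OF norm_ge_zero norm_K_le_c1[OF zero_in_domain]]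
    order_trans[OF norm_ge_zero norm_Phi_le_c2[OF zero_in_domain zero_in_domain]]
    order_trans[OF norm_ge_zero norm_y_le_Y[OF zero_in_domain]] .

definition \<phi> :: "real \<Rightarrow> real^'n" where "\<phi> t = p t + K t *v m t"

lemma phi_deriv: "t \<in> {0..T} \<Longrightarrow>
    (\<phi> has_vector_derivative - (transpose (A + G - \<gamma> *\<^sub>R K t) *v \<phi> t) + K t *v (N *v y t))
    (at t within {0..T})"
  unfolding \<phi>_def[abs_def] by (rule riccati_decoupling[OF p_deriv m_deriv K_deriv K_symmetric])

lemma phi_T: "\<phi> T = 0"
  by (simp add: \<phi>_def p_T K_T)

lemma m_eq_integral:
  assumes "t \<in> {0..T}"
  shows "((\<lambda>s. \<Phi> t s *v (N *v y s + \<gamma> *\<^sub>R \<phi> s)) has_integral m t) {0..t}"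
proof (rule variation_of_constants[where x = m, OF _ m_0 _ assms])
  fix t assume "t \<in> {0..T}"
  from m_deriv[OF this] show "(m has_vector_derivative
      (A + G - \<gamma> *\<^sub>R K t) *v m t + (N *v y t + \<gamma> *\<^sub>R \<phi> t)) (at t within {0..T})"
    by (rule has_vector_derivative_eq_rhs) (simp add: \<phi>_def matrix_vector_algebra algebra_simps)
next
  show "continuous_on {0..T} (\<lambda>s. N *v y s + \<gamma> *\<^sub>R \<phi> s)"
    using continuous_on_vector_derivative[OF y_deriv] continuous_on_vector_derivative[OF phi_deriv]
    by (intro continuous_intros bounded_bilinear.continuous_on[OF bounded_bilinear_matrix_vector_mult])
qed

lemma phi_eq_integral:
  "r \<in> {0..T} \<Longrightarrow> ((\<lambda>s. transpose (\<Phi> s r) *v (K s *v (N *v y s))) has_integral (- \<phi> r)) {r..T}"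
  by (rule adjoint_variation_of_constants[OF _ phi_deriv phi_T])

lemma y_eq_integral:
  assumes t: "t \<in> {0..T}"
  shows "((\<lambda>s. transpose (mexp ((s - t) *\<^sub>R A)) *v ((Q ** (mat 1 - \<Gamma>)) *v m s)) has_integral (- y t)) {t..T}"
proof (rule backward_variation_of_constants[where C = "\<lambda>s. transpose A"])
  fix s assume s: "s \<in> {t..T}"
  from bounded_linear.has_vector_derivative[OF bounded_linear_transpose mexp_shift_has_vector_derivative]
  show "((\<lambda>s. transpose (mexp ((s - t) *\<^sub>R A))) has_vector_derivative
      transpose (mexp ((s - t) *\<^sub>R A)) ** transpose A) (at s within {t..T})"
    by (simp add: matrix_transpose_mul)
  have "{t..T} \<subseteq> {0..T}" "s \<in> {0..T}" using s t by auto
  then show "(y has_vector_derivative - (transpose A *v y s) + (Q ** (mat 1 - \<Gamma>)) *v m s) (at s within {t..T})"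
    using has_vector_derivative_within_subset y_deriv by blast
qed (use t y_T in \<open>auto simp: mexp_zero\<close>)

lemma norm_phi_le:
  assumes r: "r \<in> {0..T}"
  shows "norm (\<phi> r) \<le> c2 * c1 * norm N * Y * (T - r)"
proof -
  have "norm (- \<phi> r) \<le> (c2 * c1 * norm N * Y) * Henstock_Kurzweil_Integration.content {r..T}"
  proof (rule has_integral_bound_real[OF _ finite.emptyI phi_eq_integral[OF r]])
    show "0 \<le> c2 * c1 * norm N * Y"
      using c1_nonneg c2_nonneg Y_nonneg by simp
    fix s assume "s \<in> {r..T} - {}"
    then have s: "s \<in> {0..T}" using r by auto
    have "norm (transpose (\<Phi> s r) *v (K s *v (N *v y s))) \<le> norm (\<Phi> s r) * (norm (K s) * (norm N * norm (y s)))"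
      by (intro order_trans[OF norm_transpose_matrix_vector_mult_le] mult_left_mono
          order_trans[OF norm_matrix_vector_mult_le] norm_matrix_vector_mult_le norm_ge_zero)
    also have "\<dots> \<le> c2 * (c1 * (norm N * Y))"
      using norm_Phi_le_c2[OF s r] norm_K_le_c1[OF s] norm_y_le_Y[OF s] c1_nonneg c2_nonneg Y_nonneg
      by (intro mult_mono) auto
    finally show "norm (transpose (\<Phi> s r) *v (K s *v (N *v y s))) \<le> c2 * c1 * norm N * Y"
      by (simp add: mult_ac)
  qed
  then show ?thesis using r by simp
qed

lemma norm_m_le:
  assumes t: "t \<in> {0..T}"
  shows "norm (m t) \<le> c2 * norm N * Y * (t + \<gamma> * c1 * c2 * (T * t - t\<^sup>2 / 2))"
proof -
  define a where "a = c2 * norm N * Y"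
  define b where "b = \<gamma> * c2 * (c2 * c1 * norm N * Y)"
  have "((\<lambda>s. a * s + b * (T * s - s\<^sup>2 / 2)) has_real_derivative a + b * (T - s)) (at s within {0..t})"
    for s
    by (auto intro!: derivative_eq_intros simp: algebra_simps)
  then have "((\<lambda>s. a + b * (T - s)) has_integral
      (a * t + b * (T * t - t\<^sup>2 / 2)) - (a * 0 + b * (T * 0 - 0\<^sup>2 / 2))) {0..t}"
    using t by (intro fundamental_theorem_of_calculus) (auto simp: has_real_derivative_iff_has_vector_derivative)
  then have bound: "((\<lambda>s. a + b * (T - s)) has_integral a * t + b * (T * t - t\<^sup>2 / 2)) {0..t}"
    by simp
  have "norm (m t) \<le> integral {0..t} (\<lambda>s. a + b * (T - s))"
    unfolding integral_unique[OF m_eq_integral[OF t], symmetric]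
  proof (rule integral_norm_bound_integral)
    show "(\<lambda>s. \<Phi> t s *v (N *v y s + \<gamma> *\<^sub>R \<phi> s)) integrable_on {0..t}"
      using m_eq_integral[OF t] by blast
    show "(\<lambda>s. a + b * (T - s)) integrable_on {0..t}" using bound by blast
    fix s assume "s \<in> {0..t}"
    then have s: "s \<in> {0..T}" using t by auto
    have "norm (\<Phi> t s *v (N *v y s + \<gamma> *\<^sub>R \<phi> s)) \<le> norm (\<Phi> t s) * (norm N * norm (y s) + \<gamma> * norm (\<phi> s))"
      using gamma_pos
      by (intro order_trans[OF norm_matrix_vector_mult_le] mult_left_mono
          order_trans[OF norm_triangle_ineq] add_mono norm_matrix_vector_mult_le) auto
    also have "\<dots> \<le> c2 * (norm N * Y + \<gamma> * (c2 * c1 * norm N * Y * (T - s)))"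
      using norm_Phi_le_c2[OF t s] norm_y_le_Y[OF s] norm_phi_le[OF s] gamma_pos c2_nonneg Y_nonneg
      by (intro mult_mono add_mono) auto
    also have "\<dots> = a + b * (T - s)"
      unfolding a_def b_def by (simp add: algebra_simps)
    finally show "norm (\<Phi> t s *v (N *v y s + \<gamma> *\<^sub>R \<phi> s)) \<le> a + b * (T - s)" .
  qed
  also have "\<dots> = a * t + b * (T * t - t\<^sup>2 / 2)"
    using integral_unique[OF bound] .
  finally show ?thesis
    unfolding a_def b_def by (simp add: algebra_simps)
qed

lemma norm_y_le:
  assumes t: "t \<in> {0..T}"
  shows "norm (y t) \<le> c2 * norm N * norm (Q ** (mat 1 - \<Gamma>)) * (c3 + \<gamma> * c1 * c2 * c4) * Y"
proof -
  define k where "k = norm (Q ** (mat 1 - \<Gamma>)) * (c2 * norm N * Y)"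
  define c where "c = \<gamma> * c1 * c2"
  have "0 \<le> k" "0 \<le> c"
    unfolding k_def c_def using c1_nonneg c2_nonneg Y_nonneg gamma_pos by simp_all
  define E where "E s = norm (mexp ((s - t) *\<^sub>R A))" for s
  have E_cont: "continuous_on {t..T} E"
    unfolding E_def by (intro continuous_intros continuous_on_mexp)
  have I1: "(\<lambda>s. E s * s) integrable_on {t..T}"
    and I2: "(\<lambda>s. c * (E s * (T * s - s\<^sup>2 / 2))) integrable_on {t..T}"
    by (intro integrable_continuous_interval continuous_intros E_cont; simp)+
  have "norm (y t) \<le> integral {t..T} (\<lambda>s. k * (E s * s + c * (E s * (T * s - s\<^sup>2 / 2))))"
    unfolding norm_minus_cancel[of "y t", symmetric] integral_unique[OF y_eq_integral[OF t], symmetric]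
  proof (rule integral_norm_bound_integral)
    show "(\<lambda>s. transpose (mexp ((s - t) *\<^sub>R A)) *v ((Q ** (mat 1 - \<Gamma>)) *v m s)) integrable_on {t..T}"
      using y_eq_integral[OF t] by blast
    show "(\<lambda>s. k * (E s * s + c * (E s * (T * s - s\<^sup>2 / 2)))) integrable_on {t..T}"
      by (intro integrable_continuous_interval continuous_intros E_cont) auto
    fix s assume "s \<in> {t..T}"
    then have s: "s \<in> {0..T}" using t by auto
    have "norm (transpose (mexp ((s - t) *\<^sub>R A)) *v ((Q ** (mat 1 - \<Gamma>)) *v m s))
        \<le> E s * (norm (Q ** (mat 1 - \<Gamma>)) * norm (m s))"
      unfolding E_def
      by (intro order_trans[OF norm_transpose_matrix_vector_mult_le] mult_left_mono
          norm_matrix_vector_mult_le norm_ge_zero)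
    also have "\<dots> \<le> E s * (norm (Q ** (mat 1 - \<Gamma>))
        * (c2 * norm N * Y * (s + \<gamma> * c1 * c2 * (T * s - s\<^sup>2 / 2))))"
      unfolding E_def by (intro mult_left_mono norm_m_le[OF s] norm_ge_zero)
    also have "\<dots> = k * (E s * s + c * (E s * (T * s - s\<^sup>2 / 2)))"
      unfolding k_def c_def by (simp add: algebra_simps)
    finally show "norm (transpose (mexp ((s - t) *\<^sub>R A)) *v ((Q ** (mat 1 - \<Gamma>)) *v m s))
        \<le> k * (E s * s + c * (E s * (T * s - s\<^sup>2 / 2)))" .
  qed
  also have "\<dots> = k * (integral {t..T} (\<lambda>s. E s * s) + c * integral {t..T} (\<lambda>s. E s * (T * s - s\<^sup>2 / 2)))"
    by (simp add: integral_add[OF I1 I2] integral_real_mult_left)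
  also have "\<dots> \<le> k * (c3 + c * c4)"
  proof -
    have "continuous_on {0..T} (\<lambda>s::real. T * s - s\<^sup>2 / 2)"
      by (intro continuous_intros) auto
    from integral_mexp_weight_le_SUP[OF continuous_on_id t] integral_mexp_weight_le_SUP[OF this t]
    show ?thesis
      unfolding c3_def c4_def E_def using \<open>0 \<le> k\<close> \<open>0 \<le> c\<close>
      by (intro mult_left_mono add_mono mult_left_mono) auto
  qed
  also have "\<dots> = c2 * norm N * norm (Q ** (mat 1 - \<Gamma>)) * (c3 + \<gamma> * c1 * c2 * c4) * Y"
    unfolding k_def c_def by (simp add: algebra_simps)
  finally show ?thesis .
qed

text \<open>\<open>Y \<le> \<kappa> Y\<close> with \<open>\<kappa> < 1\<close> forces \<open>y = 0\<close>, and then \<open>\<phi> = 0\<close>, \<open>m = 0\<close> and \<open>p = \<phi> - K m = 0\<close>.\<close>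

lemma vanishes:
  assumes small: "c2 * norm N * norm (Q ** (mat 1 - \<Gamma>)) * (c3 + \<gamma> * c1 * c2 * c4) < 1"
    and t: "t \<in> {0..T}"
  shows "m t = 0 \<and> p t = 0 \<and> y t = 0"
proof -
  let ?\<kappa> = "c2 * norm N * norm (Q ** (mat 1 - \<Gamma>)) * (c3 + \<gamma> * c1 * c2 * c4)"
  have "Y \<le> ?\<kappa> * Y"
    unfolding Y_def by (rule cSUP_least) (use T_pos norm_y_le[unfolded Y_def] in auto)
  then have "Y = 0"
    using small Y_nonneg by (metis mult_le_cancel_right1 not_le order_antisym)
  then show ?thesis
    using norm_y_le_Y[OF t] norm_phi_le[OF t] norm_m_le[OF t]
    by (simp add: \<phi>_def eq_neg_iff_add_eq_0 add.commute)
qed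

end

type_synonym 'n mf_index = "('n::finite + ('n + 'n)) option"

definition mf_state :: "real \<Rightarrow> real^'n \<Rightarrow> real^'n \<Rightarrow> real^'n \<Rightarrow> real^'n mf_index" where
  "mf_state c m p y = (\<chi> j. case j of None \<Rightarrow> c | Some (Inl i) \<Rightarrow> m $ i
     | Some (Inr (Inl i)) \<Rightarrow> p $ i | Some (Inr (Inr i)) \<Rightarrow> y $ i)"

definition mf_c :: "real^('n::finite) mf_index \<Rightarrow> real" where "mf_c w = w $ None"
definition mf_m :: "real^'n mf_index \<Rightarrow> real^'n" where "mf_m w = (\<chi> i. w $ Some (Inl i))"
definition mf_p :: "real^'n mf_index \<Rightarrow> real^'n" where "mf_p w = (\<chi> i. w $ Some (Inr (Inl i)))"
definition mf_y :: "real^'n mf_index \<Rightarrow> real^'n" where "mf_y w = (\<chi> i. w $ Some (Inr (Inr i)))"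

lemma mf_components_state [simp]:
  "mf_c (mf_state c m p y) = c" "mf_m (mf_state c m p y) = m"
  "mf_p (mf_state c m p y) = p" "mf_y (mf_state c m p y) = y"
  by (simp_all add: mf_state_def mf_c_def mf_m_def mf_p_def mf_y_def vec_eq_iff)

lemma mf_components_eq_iff:
  "w = w' \<longleftrightarrow> mf_c w = mf_c w' \<and> mf_m w = mf_m w' \<and> mf_p w = mf_p w' \<and> mf_y w = mf_y w'"
proof
  assume "mf_c w = mf_c w' \<and> mf_m w = mf_m w' \<and> mf_p w = mf_p w' \<and> mf_y w = mf_y w'"
  then have c: "w $ None = w' $ None" and m: "\<forall>i. w $ Some (Inl i) = w' $ Some (Inl i)"
    and p: "\<forall>i. w $ Some (Inr (Inl i)) = w' $ Some (Inr (Inl i))"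
    and y: "\<forall>i. w $ Some (Inr (Inr i)) = w' $ Some (Inr (Inr i))"
    by (auto simp: mf_c_def mf_m_def mf_p_def mf_y_def vec_eq_iff)
  have py: "w $ Some (Inr k) = w' $ Some (Inr k)" for k
    using p y by (cases k) auto
  have "w $ j = w' $ j" for j
  proof (cases j)
    case (Some k)
    with m py show ?thesis by (cases k) auto
  qed (simp add: c)
  then show "w = w'" by (simp add: vec_eq_iff)
qed simp

lemma mf_components_zero [simp]: "mf_c 0 = 0" "mf_m 0 = 0" "mf_p 0 = 0" "mf_y 0 = 0"
  by (simp_all add: mf_c_def mf_m_def mf_p_def mf_y_def vec_eq_iff)

lemma mf_components_add [simp]:
  "mf_c (w + w') = mf_c w + mf_c w'" "mf_m (w + w') = mf_m w + mf_m w'"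
  "mf_p (w + w') = mf_p w + mf_p w'" "mf_y (w + w') = mf_y w + mf_y w'"
  by (simp_all add: mf_c_def mf_m_def mf_p_def mf_y_def vec_eq_iff)

lemma mf_components_scaleR [simp]:
  "mf_c (r *\<^sub>R w) = r * mf_c w" "mf_m (r *\<^sub>R w) = r *\<^sub>R mf_m w"
  "mf_p (r *\<^sub>R w) = r *\<^sub>R mf_p w" "mf_y (r *\<^sub>R w) = r *\<^sub>R mf_y w"
  by (simp_all add: mf_c_def mf_m_def mf_p_def mf_y_def vec_eq_iff)

lemma bounded_linear_mf_components:
  "bounded_linear mf_c" "bounded_linear mf_m" "bounded_linear mf_p" "bounded_linear mf_y"
  by (auto intro!: linearI simp flip: linear_conv_bounded_linear)

text \<open>The affine system (MF) becomes linear on the augmented state \<open>(c, m, p, y)\<close> with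
  \<open>c' = 0\<close>; the data \<open>\<eta>\<close> enters through \<open>c \<eta>\<close>.\<close>

definition mf_field ::
  "real^'n^'n \<Rightarrow> real^'n^'n \<Rightarrow> real^'n^'n \<Rightarrow> real^'n^'n \<Rightarrow> real^'n^'n \<Rightarrow> real^'n \<Rightarrow> real
   \<Rightarrow> real^'n mf_index \<Rightarrow> real^'n mf_index" where
  "mf_field A G \<Gamma> Q N \<eta> \<gamma> w = mf_state 0
     ((A + G) *v mf_m w + N *v mf_y w + \<gamma> *\<^sub>R mf_p w)
     (- (transpose (A + G) *v mf_p w)
      - (transpose (mat 1 - \<Gamma>) ** Q) *v (mf_m w - (\<Gamma> *v mf_m w + mf_c w *\<^sub>R \<eta>)))
     (- (transpose A *v mf_y w) + Q *v (mf_m w - (\<Gamma> *v mf_m w + mf_c w *\<^sub>R \<eta>)))"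

lemma linear_mf_field: "linear (mf_field A G \<Gamma> Q N \<eta> \<gamma>)"
  by (rule linearI)
     (simp_all add: mf_components_eq_iff mf_field_def matrix_vector_algebra scaleR_add_left algebra_simps)

definition mf_flow ::
  "real^'n^'n \<Rightarrow> real^'n^'n \<Rightarrow> real^'n^'n \<Rightarrow> real^'n^'n \<Rightarrow> real^'n^'n \<Rightarrow> real^'n \<Rightarrow> real
   \<Rightarrow> real^'n mf_index \<Rightarrow> real \<Rightarrow> real^'n mf_index" where
  "mf_flow A G \<Gamma> Q N \<eta> \<gamma> w t = mexp (t *\<^sub>R matrix (mf_field A G \<Gamma> Q N \<eta> \<gamma>)) *v w"

lemma mf_flow_deriv:
  "((mf_flow A G \<Gamma> Q N \<eta> \<gamma> w) has_vector_derivative mf_field A G \<Gamma> Q N \<eta> \<gamma> (mf_flow A G \<Gamma> Q N \<eta> \<gamma> w t))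
    (at t within S)"
proof -
  let ?F = "mf_field A G \<Gamma> Q N \<eta> \<gamma>"
  have "((\<lambda>t. mexp (t *\<^sub>R matrix ?F) *v w) has_vector_derivative (matrix ?F ** mexp (t *\<^sub>R matrix ?F)) *v w)
      (at t within S)"
    by (rule bounded_linear.has_vector_derivative[OF
          bounded_bilinear.bounded_linear_left[OF bounded_bilinear_matrix_vector_mult]
          mexp_has_vector_derivative])
  then show ?thesis
    unfolding mf_flow_def[abs_def]
    by (simp add: matrix_vector_mul_assoc[symmetric] matrix_vector_mul(2)[OF linear_mf_field])
qed

lemma mf_flow_zero: "mf_flow A G \<Gamma> Q N \<eta> \<gamma> w 0 = w"
  by (simp add: mf_flow_def mexp_zero)

lemma mf_flow_linear: "linear (\<lambda>w. mf_flow A G \<Gamma> Q N \<eta> \<gamma> w t)"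
  unfolding mf_flow_def by (rule matrix_vector_mul_linear)

lemma mf_c_flow:
  assumes "t \<in> {0..T}"
  shows "mf_c (mf_flow A G \<Gamma> Q N \<eta> \<gamma> w t) = mf_c w"
proof -
  let ?x = "\<lambda>t. mf_c (mf_flow A G \<Gamma> Q N \<eta> \<gamma> w t) - mf_c w"
  have "(?x has_vector_derivative 0) (at s within {0..T})" for s
    using has_vector_derivative_diff[OF bounded_linear.has_vector_derivative[OF
          bounded_linear_mf_components(1) mf_flow_deriv] has_vector_derivative_const]
    by (simp add: mf_field_def)
  moreover have "?x 0 = 0" by (simp add: mf_flow_zero)
  ultimately have "?x t = 0"
    using assms by (intro linear_growth_vanishing[where L = 0, OF _ _ _ _ assms]) auto
  then show ?thesis by simp
qed

lemma MF_sol_mf_flow: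
  fixes A G \<Gamma> Q H :: "real^'n^'n" and B :: "real^'k^'n" and R :: "real^'k^'k"
    and \<eta> :: "real^'n" and \<gamma> T :: real and w :: "real^'n mf_index"
  defines "N \<equiv> B ** matrix_inv R ** transpose B"
  defines "x \<equiv> mf_flow A G \<Gamma> Q N \<eta> \<gamma> w"
  assumes "mf_p (x T) = H *v mf_m (x T)" and "mf_y (x T) = - (H *v mf_m (x T))"
  shows "MF_sol A G \<Gamma> B R Q H (mf_c w *\<^sub>R \<eta>) (mf_m w) \<gamma> T
    (\<lambda>t. mf_m (x t)) (\<lambda>t. mf_p (x t)) (\<lambda>t. mf_y (x t))"
  unfolding MF_sol_def
proof (intro conjI ballI)
  show "mf_m (x 0) = mf_m w" by (simp add: x_def mf_flow_zero)
  fix t assume t: "t \<in> {0..T}"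
  have c: "mf_c (x t) = mf_c w" unfolding x_def by (rule mf_c_flow[OF t])
  have deriv: "((\<lambda>t. f (x t)) has_vector_derivative f (mf_field A G \<Gamma> Q N \<eta> \<gamma> (x t))) (at t within {0..T})"
    if "bounded_linear f" for f
    unfolding x_def by (rule bounded_linear.has_vector_derivative[OF that mf_flow_deriv])
  show "((\<lambda>t. mf_m (x t)) has_vector_derivative
      (A + G) *v mf_m (x t) + (B ** matrix_inv R ** transpose B) *v mf_y (x t) + \<gamma> *\<^sub>R mf_p (x t))
      (at t within {0..T})"
    using deriv[OF bounded_linear_mf_components(2)] by (simp add: mf_field_def N_def)
  show "((\<lambda>t. mf_p (x t)) has_vector_derivative
      - (transpose (A + G) *v mf_p (x t))
      - (transpose (mat 1 - \<Gamma>) ** Q) *v (mf_m (x t) - (\<Gamma> *v mf_m (x t) + mf_c w *\<^sub>R \<eta>)))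
      (at t within {0..T})"
    using deriv[OF bounded_linear_mf_components(3)] by (simp add: mf_field_def c)
  show "((\<lambda>t. mf_y (x t)) has_vector_derivative
      - (transpose A *v mf_y (x t)) + Q *v (mf_m (x t) - (\<Gamma> *v mf_m (x t) + mf_c w *\<^sub>R \<eta>)))
      (at t within {0..T})"
    using deriv[OF bounded_linear_mf_components(4)] by (simp add: mf_field_def c)
qed (use assms in auto)

text \<open>Fredholm alternative by shooting: the linear map sending an initial state to
  \<open>(c, m(0), p(T) - H m(T), y(T) + H m(T))\<close> is injective by uniqueness for the homogeneous
  problem, hence surjective.\<close>

lemma MF_sol_exists:
  fixes B :: "real^'k^'n" and R :: "real^'k^'k"
  assumes unique: "\<And>m p y. MF_sol A G \<Gamma> B R Q H 0 0 \<gamma> T m p y \<Longrightarrow> m 0 = 0 \<and> p 0 = 0 \<and> y 0 = 0"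
  shows "\<exists>m p y. MF_sol A G \<Gamma> B R Q H \<eta> m0 \<gamma> T m p y"
proof -
  define N where "N = B ** matrix_inv R ** transpose B"
  define x where "x = mf_flow A G \<Gamma> Q N \<eta> \<gamma>"
  define shoot where "shoot w = mf_state (mf_c w) (mf_m w)
      (mf_p (x w T) - H *v mf_m (x w T)) (mf_y (x w T) + H *v mf_m (x w T))" for w
  have lin: "linear (\<lambda>w. x w T)" unfolding x_def by (rule mf_flow_linear)
  have "linear shoot"
    by (rule linearI)
       (simp_all add: mf_components_eq_iff shoot_def linear_add[OF lin] linear_scale[OF lin]
         matrix_vector_algebra algebra_simps)
  moreover have "inj shoot"
    unfolding linear_injective_0[OF \<open>linear shoot\<close>]
  proof (intro allI impI)
    fix w assume "shoot w = 0"
    then have w: "mf_c w = 0" "mf_m w = 0"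
      "mf_p (x w T) = H *v mf_m (x w T)" "mf_y (x w T) = - (H *v mf_m (x w T))"
      by (simp_all add: mf_components_eq_iff shoot_def eq_neg_iff_add_eq_0)
    have "MF_sol A G \<Gamma> B R Q H 0 0 \<gamma> T
        (\<lambda>t. mf_m (x w t)) (\<lambda>t. mf_p (x w t)) (\<lambda>t. mf_y (x w t))"
      using MF_sol_mf_flow[of A G \<Gamma> Q B R \<eta> \<gamma> w T H] w unfolding x_def N_def by simp
    from unique[OF this] show "w = 0"
      using w(1) by (simp add: mf_components_eq_iff x_def mf_flow_zero)
  qed
  ultimately obtain w where w: "shoot w = mf_state 1 m0 0 0"
    by (metis linear_inj_imp_surj surjD)
  then have "mf_c w = 1" "mf_m w = m0"
    "mf_p (x w T) = H *v mf_m (x w T)" "mf_y (x w T) = - (H *v mf_m (x w T))"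
    by (simp_all add: mf_components_eq_iff shoot_def eq_neg_iff_add_eq_0)
  with MF_sol_mf_flow[of A G \<Gamma> Q B R \<eta> \<gamma> w T H] show ?thesis
    unfolding x_def N_def by auto
qed

lemma MF_sol_diff:
  assumes "MF_sol A G \<Gamma> B R Q H \<eta> m0 \<gamma> T m p y" and "MF_sol A G \<Gamma> B R Q H \<eta> m0 \<gamma> T m' p' y'"
  shows "MF_sol A G \<Gamma> B R Q H 0 0 \<gamma> T (\<lambda>t. m' t - m t) (\<lambda>t. p' t - p t) (\<lambda>t. y' t - y t)"
  unfolding MF_sol_def
proof (intro conjI ballI)
  fix t assume "t \<in> {0..T}"
  with assms show "((\<lambda>t. m' t - m t) has_vector_derivative
      (A + G) *v (m' t - m t) + (B ** matrix_inv R ** transpose B) *v (y' t - y t) + \<gamma> *\<^sub>R (p' t - p t))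
      (at t within {0..T})"
    and "((\<lambda>t. p' t - p t) has_vector_derivative
      - (transpose (A + G) *v (p' t - p t))
      - (transpose (mat 1 - \<Gamma>) ** Q) *v (m' t - m t - (\<Gamma> *v (m' t - m t) + 0)))
      (at t within {0..T})"
    and "((\<lambda>t. y' t - y t) has_vector_derivative
      - (transpose A *v (y' t - y t)) + Q *v (m' t - m t - (\<Gamma> *v (m' t - m t) + 0)))
      (at t within {0..T})"
    unfolding MF_sol_def
    by (auto intro!: has_vector_derivative_eq_rhs[OF has_vector_derivative_diff]
        simp: matrix_vector_algebra algebra_simps)
qed (use assms in \<open>simp_all add: MF_sol_def matrix_vector_algebra\<close>)

lemma MF_sol_homogeneous_vanishes:
  fixes B :: "real^'k^'n" and R :: "real^'k^'k"
  assumes "0 < T" and "0 < \<gamma>"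
    and K_sol: "riccati_sol A G \<gamma> (transpose (mat 1 - \<Gamma>) ** Q ** (mat 1 - \<Gamma>)) 0 T K"
    and K_symmetric: "\<And>t. t \<in> {0..T} \<Longrightarrow> transpose (K t) = K t"
    and Phi: "fundamental_matrix A G \<gamma> K T \<Phi>"
    and small: "(SUP ts\<in>{0..T}\<times>{0..T}. norm (\<Phi> (fst ts) (snd ts)))
                * norm (B ** matrix_inv R ** transpose B) * norm (Q ** (mat 1 - \<Gamma>))
                * ((SUP t\<in>{0..T}. integral {t..T} (\<lambda>s. norm (mexp ((s - t) *\<^sub>R A)) * s))
                   + \<gamma> * (SUP t\<in>{0..T}. norm (K t))
                       * (SUP ts\<in>{0..T}\<times>{0..T}. norm (\<Phi> (fst ts) (snd ts)))
                       * (SUP t\<in>{0..T}. integral {t..T}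
                            (\<lambda>s. norm (mexp ((s - t) *\<^sub>R A)) * (T * s - s\<^sup>2 / 2))))
                < 1"
    and sol: "MF_sol A G \<Gamma> B R Q 0 0 0 \<gamma> T m p y"
    and t: "t \<in> {0..T}"
  shows "m t = 0 \<and> p t = 0 \<and> y t = 0"
proof -
  interpret MF_homogeneous A G \<Gamma> Q "B ** matrix_inv R ** transpose B" \<gamma> T K \<Phi> m p y
  proof
    fix t assume "t \<in> {0..T}"
    with sol show "(m has_vector_derivative
        (A + G) *v m t + (B ** matrix_inv R ** transpose B) *v y t + \<gamma> *\<^sub>R p t) (at t within {0..T})"
      and "(p has_vector_derivative - (transpose (A + G) *v p t)
        - (transpose (mat 1 - \<Gamma>) ** Q ** (mat 1 - \<Gamma>)) *v m t) (at t within {0..T})"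
      and "(y has_vector_derivative - (transpose A *v y t) + (Q ** (mat 1 - \<Gamma>)) *v m t)
        (at t within {0..T})"
      unfolding MF_sol_def
      by (auto intro!: has_vector_derivative_eq_rhs simp: matrix_vector_algebra)
  qed (use assms in \<open>simp_all add: MF_sol_def\<close>)
  show ?thesis
    using vanishes[OF _ t] small unfolding c1_def c2_def c3_def c4_def by simp
qed

theorem theorem15:
  fixes A G \<Gamma> Q H :: "real^'n^'n"
    and B :: "real^'k^'n" and R :: "real^'k^'k"
    and \<eta> m0 :: "real^'n" and \<gamma> T :: real
    and K :: "real \<Rightarrow> real^'n^'n" and \<Phi> :: "real \<Rightarrow> real \<Rightarrow> real^'n^'n"
  assumes T_pos: "T > 0" and gamma_pos: "\<gamma> > 0"
    and Q_psd: "psd Q" and H_psd: "psd H" and R_pd: "pd R"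
    and H_zero: "H = 0"
    and K_sol: "riccati_sol A G \<gamma> (transpose (mat 1 - \<Gamma>) ** Q ** (mat 1 - \<Gamma>)) H T K"
    and K_unique: "\<And>K'. riccati_sol A G \<gamma> (transpose (mat 1 - \<Gamma>) ** Q ** (mat 1 - \<Gamma>)) H T K'
                      \<Longrightarrow> \<forall>t\<in>{0..T}. K' t = K t"
    and Phi: "fundamental_matrix A G \<gamma> K T \<Phi>"
    and small: "(SUP ts\<in>{0..T}\<times>{0..T}. norm (\<Phi> (fst ts) (snd ts)))
                * norm (B ** matrix_inv R ** transpose B) * norm (Q ** (mat 1 - \<Gamma>))
                * ((SUP t\<in>{0..T}. integral {t..T} (\<lambda>s. norm (mexp ((s - t) *\<^sub>R A)) * s))
                   + \<gamma> * (SUP t\<in>{0..T}. norm (K t))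
                       * (SUP ts\<in>{0..T}\<times>{0..T}. norm (\<Phi> (fst ts) (snd ts)))
                       * (SUP t\<in>{0..T}. integral {t..T}
                            (\<lambda>s. norm (mexp ((s - t) *\<^sub>R A)) * (T * s - s\<^sup>2 / 2))))
                < 1"
  shows "\<exists>m p y. MF_sol A G \<Gamma> B R Q H \<eta> m0 \<gamma> T m p y \<and>
           (\<forall>m' p' y'. MF_sol A G \<Gamma> B R Q H \<eta> m0 \<gamma> T m' p' y' \<longrightarrow>
              (\<forall>t\<in>{0..T}. m' t = m t \<and> p' t = p t \<and> y' t = y t))"
proof -
  have Qhat_symmetric: "transpose (transpose (mat 1 - \<Gamma>) ** Q ** (mat 1 - \<Gamma>))
      = transpose (mat 1 - \<Gamma>) ** Q ** (mat 1 - \<Gamma>)"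
    using Q_psd by (simp add: psd_def matrix_transpose_mul matrix_mul_assoc)
  have K_symmetric: "transpose (K t) = K t" if "t \<in> {0..T}" for t
    using K_unique[OF riccati_sol_transpose[OF Qhat_symmetric _ K_sol]] H_psd that
    by (simp add: psd_def)
  have homogeneous: "\<forall>t\<in>{0..T}. m t = 0 \<and> p t = 0 \<and> y t = 0"
    if "MF_sol A G \<Gamma> B R Q H 0 0 \<gamma> T m p y" for m p y
    using MF_sol_homogeneous_vanishes[OF T_pos gamma_pos _ K_symmetric Phi small] K_sol that H_zero
    by simp
  obtain m p y where sol: "MF_sol A G \<Gamma> B R Q H \<eta> m0 \<gamma> T m p y"
    using MF_sol_exists[of A G \<Gamma> B R Q H \<gamma> T] homogeneous T_pos by fastforce
  moreover have "\<forall>t\<in>{0..T}. m' t = m t \<and> p' t = p t \<and> y' t = y t"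
    if "MF_sol A G \<Gamma> B R Q H \<eta> m0 \<gamma> T m' p' y'" for m' p' y'
    using homogeneous[OF MF_sol_diff[OF sol that]] by simp
  ultimately show ?thesis by blast
qed

end
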